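(* Let $1\le m\le n$ and let $f\in W^{1,1}_{\mathrm{loc}}(\mathbb{R}^n;\mathbb{R}^m)$ (a fixed pointwise defined representative). Let $\bar f(x)=(x,f(x))$, $\mathcal{G}_f=\bar f(\mathbb{R}^n)$ and $\pi:\mathbb{R}^{n+m}\to\mathbb{R}^n$, $\pi(x,x_{n+1},\dots,x_{n+m})=x$. Suppose there is $\theta\in L^1_{\mathrm{loc}}(\mathbb{R}^n)$ such that $$\mathcal{H}^{n-m}_\infty\bigl(\pi(\mathcal{G}_f\cap B(z,r))\bigr)\le r^{-m}\int_{\pi(\mathcal{G}_f\cap B(z,4r))}\theta(x)\,dx$$ for all $z\in\mathbb{R}^{n+m}$ and $r>0$. Then there is a constant $C=C(m,n)$ such that $$\mathcal{H}^n(\bar f(E))\le C\int_E\theta(x)\,dx$$ for all $\mathcal{L}^n$ measurable $E\subset\mathbb{R}^n$. In particular, $\bar f$ satisfies condition (N), i.e. $\mathcal{H}^n(\bar f(E))=0$ whenever $\mathcal{L}^n(E)=0$.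
   Context: For $q\ge0$, $\mathcal{H}^q_\infty(E)$ is the infimum of $\sum_j\boldsymbol\alpha_q(\mathrm{diam}\,E_j/2)^q$ over countable coverings $\{E_j\}$ of $E$, with $\boldsymbol\alpha_q=\pi^{q/2}/\Gamma(\frac q2+1)$; $\mathcal{H}^n$ is $n$-dimensional Hausdorff measure. *)

theory Defs
  imports "HOL-Analysis.Analysis"
begin

definition locally_integrable ::
  "('a::euclidean_space \<Rightarrow> 'b::{banach,second_countable_topology}) \<Rightarrow> bool" where
  "locally_integrable f \<longleftrightarrow> (\<forall>K. compact K \<longrightarrow> set_integrable lebesgue K f)"

fun Ck :: "nat \<Rightarrow> (real^'n \<Rightarrow> real) \<Rightarrow> bool" where
  "Ck 0 f = continuous_on UNIV f"
| "Ck (Suc k) f = (f differentiable_on UNIV \<and> continuous_on UNIV f \<and>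
      (\<forall>i. Ck k (\<lambda>x. frechet_derivative f (at x) (axis i 1))))"

definition Cinf :: "(real^'n \<Rightarrow> real) \<Rightarrow> bool" where
  "Cinf f \<longleftrightarrow> (\<forall>k. Ck k f)"

definition test_function :: "(real^'n \<Rightarrow> real) \<Rightarrow> bool" where
  "test_function \<phi> \<longleftrightarrow> Cinf \<phi> \<and> compact (closure {x. \<phi> x \<noteq> 0})"

definition W11_loc :: "(real^'n \<Rightarrow> real^'m) \<Rightarrow> bool" where
  "W11_loc f \<longleftrightarrow> locally_integrable f \<and>
     (\<exists>g :: 'n \<Rightarrow> real^'n \<Rightarrow> real^'m. \<forall>i. locally_integrable (g i) \<and>
        (\<forall>\<phi>. test_function \<phi> \<longrightarrow>
           (LINT x|lebesgue. frechet_derivative \<phi> (at x) (axis i 1) *\<^sub>R f x)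
             = - (LINT x|lebesgue. \<phi> x *\<^sub>R g i x)))"

definition alpha_q :: "real \<Rightarrow> real" where
  "alpha_q q = pi powr (q/2) / Gamma (q/2 + 1)"

definition ediam :: "'a::metric_space set \<Rightarrow> ennreal" where
  "ediam S = (if bounded S then ennreal (diameter S) else \<infinity>)"

text \<open>Contribution alpha_q (diam S / 2)^q of one covering set, with the conventions
  diam(empty)^q = 0 and t^0 = 1 (also for t = 0 or t = infinity).\<close>
definition hcontrib :: "real \<Rightarrow> 'a::metric_space set \<Rightarrow> ennreal" where
  "hcontrib q S = (if S = {} then 0 else if q = 0 then 1
      else if \<not> bounded S then \<infinity>
      else ennreal (alpha_q q * (diameter S / 2) powr q))"

text \<open>H^q_delta; delta = infinity gives the Hausdorff content H^q_infty.\<close>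
definition hausdorff_approx :: "ennreal \<Rightarrow> real \<Rightarrow> 'a::metric_space set \<Rightarrow> ennreal" where
  "hausdorff_approx \<delta> q E = (INF C \<in> {C :: nat \<Rightarrow> 'a set. E \<subseteq> (\<Union>j. C j) \<and> (\<forall>j. ediam (C j) \<le> \<delta>)}.
      (\<Sum>j. hcontrib q (C j)))"

definition hausdorff_content :: "real \<Rightarrow> 'a::metric_space set \<Rightarrow> ennreal" where
  "hausdorff_content q E = hausdorff_approx \<infinity> q E"

definition hausdorff_measure :: "real \<Rightarrow> 'a::metric_space set \<Rightarrow> ennreal" where
  "hausdorff_measure q E = (SUP \<delta> \<in> {0<..}. hausdorff_approx (ennreal \<delta>) q E)"

end

(*
  Write S for the image of E under x \<mapsto> (x, f x) and n, m for the dimensions. The points of S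
  at which S has low upper density, H^n_\<infinity>(S \<inter> B(z,r)) \<le> c r^n for all small r, form an
  H^n-null set, because a set of uniformly low density has at most half of its own content.
  At every other point of S there are arbitrarily small r with c r^n < H^n_\<infinity>(S \<inter> B(z,r)).
  Covering the R^m factor of B(z,r) by a grid bounds the content of a subset of B(z,r) by
  C r^m times the (n-m)-content of its projection, so the hypothesis gives
  c r^n \<le> C \<integral> \<theta> over \<pi>(G_f \<inter> B(z,4r)). The Vitali covering lemma selects disjoint balls
  B(z,4r) whose five-fold enlargements cover this part of S; their projections are disjoint,
  so H^n(S) \<le> C \<integral>_U \<theta> for every open U \<supseteq> E, and outer regularity of \<theta> dx concludes.
*)

theory Submission
  imports Defs
begin

section \<open>Hausdorff content and Hausdorff measure\<close>

lemma alpha_q_pos: "q \<ge> 0 \<Longrightarrow> alpha_q q > 0"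
  unfolding alpha_q_def by (intro divide_pos_pos) auto

lemma hcontrib_empty [simp]: "hcontrib q {} = 0"
  by (simp add: hcontrib_def)

lemma bounded_of_dist_le:
  fixes S :: "'a::metric_space set"
  assumes "\<And>x y. x \<in> S \<Longrightarrow> y \<in> S \<Longrightarrow> dist x y \<le> d"
  shows "bounded S"
proof (cases "S = {}")
  case False
  then obtain a where "a \<in> S" by blast
  then show ?thesis using assms unfolding bounded_def by blast
qed simp

lemma diameter_le_of_dist_le:
  fixes S :: "'a::metric_space set"
  assumes "S \<noteq> {}" "\<And>x y. x \<in> S \<Longrightarrow> y \<in> S \<Longrightarrow> dist x y \<le> d"
  shows "diameter S \<le> d"
  using assms by (auto simp: diameter_def intro!: cSUP_least)

lemma ediam_le_of_dist_le:
  fixes A :: "'a::metric_space set"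
  assumes "\<And>x y. x \<in> A \<Longrightarrow> y \<in> A \<Longrightarrow> dist x y \<le> d" "d \<ge> 0"
  shows "ediam A \<le> ennreal d"
  using assms bounded_of_dist_le[OF assms(1)] diameter_le_of_dist_le[of A d]
  by (cases "A = {}") (auto simp: ediam_def intro!: ennreal_leI)

lemma hcontrib_le_of_dist_le:
  fixes A :: "'a::metric_space set"
  assumes "q > 0" "\<And>x y. x \<in> A \<Longrightarrow> y \<in> A \<Longrightarrow> dist x y \<le> d"
  shows "hcontrib q A \<le> ennreal (alpha_q q * (d/2) powr q)"
proof (cases "A = {}")
  case False
  have "bounded A" using assms(2) by (rule bounded_of_dist_le)
  moreover have "diameter A \<le> d" using False assms(2) by (rule diameter_le_of_dist_le)
  moreover have "0 \<le> diameter A" using \<open>bounded A\<close> by (rule diameter_ge_0)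
  ultimately show ?thesis using False assms(1) alpha_q_pos[of q]
    by (auto simp: hcontrib_def intro!: ennreal_leI mult_left_mono powr_mono2)
qed simp

lemma hcontrib_mono:
  assumes "q \<ge> 0" "A \<subseteq> B"
  shows "hcontrib q A \<le> hcontrib q B"
proof -
  consider "A = {}" | "q = 0" | "\<not> bounded B" | "A \<noteq> {}" "q \<noteq> 0" "bounded B" by blast
  then show ?thesis
  proof cases
    case 4
    then have "bounded A" "B \<noteq> {}" using assms bounded_subset by auto
    moreover have "diameter A \<le> diameter B" using 4 assms by (intro diameter_subset) auto
    moreover have "diameter A \<ge> 0" using \<open>bounded A\<close> by (rule diameter_ge_0)
    ultimately show ?thesis using 4 assms alpha_q_pos[of q]
      by (auto simp: hcontrib_def intro!: ennreal_leI mult_left_mono powr_mono2)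
  qed (use assms in \<open>auto simp: hcontrib_def\<close>)
qed

lemma le_mult_INF_ennreal:
  fixes c x :: ennreal
  assumes "0 < c" "c < top" "\<And>i. i \<in> I \<Longrightarrow> x \<le> c * f i"
  shows "x \<le> c * (INF i\<in>I. f i)"
proof -
  have "x / c \<le> (INF i\<in>I. f i)"
    using assms by (intro INF_greatest divide_le_posI_ennreal) auto
  then have "x / c * c \<le> (INF i\<in>I. f i) * c" by (rule mult_right_mono) simp
  moreover have "x / c * c = x" using assms by (simp add: ennreal_divide_times)
  ultimately show ?thesis by (simp add: mult.commute)
qed

lemma ennreal_term_le_suminf: "(f :: nat \<Rightarrow> ennreal) j \<le> suminf f"
  using sum_le_suminf[of f "{j}"] by simp

lemma hausdorff_approx_le_cover:
  assumes "E \<subseteq> (\<Union>j. C j)" "\<And>j. ediam (C j) \<le> \<delta>"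
  shows "hausdorff_approx \<delta> q E \<le> (\<Sum>j. hcontrib q (C j))"
  unfolding hausdorff_approx_def by (rule INF_lower) (use assms in auto)

lemma hausdorff_approx_lessE:
  assumes "hausdorff_approx \<delta> q E < x"
  obtains C where "E \<subseteq> (\<Union>j. C j)" "\<And>j. ediam (C j) \<le> \<delta>" "(\<Sum>j. hcontrib q (C j)) < x"
  using assms unfolding hausdorff_approx_def INF_less_iff by auto

lemma le_mult_hausdorff_approxI:
  assumes "0 < c" "c < top"
    and "\<And>C. E \<subseteq> (\<Union>j. C j) \<Longrightarrow> (\<And>j. ediam (C j) \<le> \<delta>) \<Longrightarrow> x \<le> c * (\<Sum>j. hcontrib q (C j))"
  shows "x \<le> c * hausdorff_approx \<delta> q E"
  unfolding hausdorff_approx_def by (rule le_mult_INF_ennreal) (use assms in auto)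

lemma hausdorff_approx_le_hcontrib:
  assumes "E \<subseteq> A" "ediam A \<le> \<delta>"
  shows "hausdorff_approx \<delta> q E \<le> hcontrib q A"
proof -
  have "hausdorff_approx \<delta> q E \<le> (\<Sum>j. hcontrib q (if j = 0 then A else {}))"
    by (rule hausdorff_approx_le_cover) (use assms in \<open>auto simp: ediam_def\<close>)
  also have "\<dots> = hcontrib q A"
    by (subst suminf_finite[of "{0}"]) auto
  finally show ?thesis .
qed

lemma hausdorff_approx_le_subfamily_cover:
  assumes "E \<subseteq> (\<Union>n\<in>I. B n)" "\<And>n. n \<in> I \<Longrightarrow> ediam (B n) \<le> \<delta>"
  shows "hausdorff_approx \<delta> q E \<le> (\<Sum>n. if n \<in> I then hcontrib q (B n) else 0)"
proof -
  have "hausdorff_approx \<delta> q E \<le> (\<Sum>n. hcontrib q (if n \<in> I then B n else {}))"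
  proof (rule hausdorff_approx_le_cover)
    show "E \<subseteq> (\<Union>n. if n \<in> I then B n else {})" using assms(1) by auto
    show "ediam (if n \<in> I then B n else {}) \<le> \<delta>" for n
      using assms(2)[of n] by (simp add: ediam_def[of "{}"])
  qed
  also have "\<dots> = (\<Sum>n. if n \<in> I then hcontrib q (B n) else 0)"
    by (intro suminf_cong) simp
  finally show ?thesis .
qed

lemma hausdorff_approx_empty [simp]: "hausdorff_approx \<delta> q {} = 0"
  using hausdorff_approx_le_hcontrib[of "{}" "{}" \<delta> q] by (simp add: ediam_def)

lemma hausdorff_approx_mono: "E \<subseteq> F \<Longrightarrow> hausdorff_approx \<delta> q E \<le> hausdorff_approx \<delta> q F"
  unfolding hausdorff_approx_def by (rule INF_superset_mono) auto

lemma hausdorff_approx_countable_subadditive: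
  "hausdorff_approx \<delta> q (\<Union>i. A i) \<le> (\<Sum>i. hausdorff_approx \<delta> q (A i))"
proof (rule ennreal_le_epsilon)
  fix e :: real assume "0 < e" "(\<Sum>i. hausdorff_approx \<delta> q (A i)) < top"
  then have lt: "hausdorff_approx \<delta> q (A i) < hausdorff_approx \<delta> q (A i) + e * (1/2) ^ Suc i" for i
    by (auto simp: less_top dest!: ennreal_suminf_lessD)
  have "\<exists>C. A i \<subseteq> (\<Union>j. C j) \<and> (\<forall>j. ediam (C j) \<le> \<delta>) \<and>
      (\<Sum>j. hcontrib q (C j)) < hausdorff_approx \<delta> q (A i) + e * (1/2) ^ Suc i" for i
    using lt[of i] by (rule hausdorff_approx_lessE) blast
  then obtain B where cover: "\<And>i. A i \<subseteq> (\<Union>j. B i j)" and diam: "\<And>i j. ediam (B i j) \<le> \<delta>"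
    and sum: "\<And>i. (\<Sum>j. hcontrib q (B i j)) \<le> hausdorff_approx \<delta> q (A i) + e * (1/2) ^ Suc i"
    by (metis less_imp_le)
  define C where "C = case_prod B \<circ> prod_decode"
  have "(\<Union>i. A i) \<subseteq> (\<Union>k. C k)"
    using cover by (auto simp: C_def subset_eq) (metis prod.case prod_encode_inverse)
  then have "hausdorff_approx \<delta> q (\<Union>i. A i) \<le> (\<Sum>k. hcontrib q (C k))"
    by (rule hausdorff_approx_le_cover) (simp add: C_def diam split: prod.split)
  also have "\<dots> = (\<Sum>i. \<Sum>j. hcontrib q (B i j))"
    unfolding C_def comp_def by (intro suminf_ennreal_2dimen) auto
  also have "\<dots> \<le> (\<Sum>i. hausdorff_approx \<delta> q (A i) + e * (1/2) ^ Suc i)"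
    by (intro suminf_le sum) auto
  also have "\<dots> = (\<Sum>i. hausdorff_approx \<delta> q (A i)) + (\<Sum>i. ennreal e * ennreal ((1/2) ^ Suc i))"
    using \<open>0 < e\<close> by (subst suminf_add[symmetric])
      (auto simp del: ennreal_suminf_cmult simp add: ennreal_mult[symmetric])
  also have "\<dots> = (\<Sum>i. hausdorff_approx \<delta> q (A i)) + e"
    unfolding ennreal_suminf_cmult
    by (subst suminf_ennreal_eq[OF zero_le_power power_half_series]) auto
  finally show "hausdorff_approx \<delta> q (\<Union>i. A i) \<le> (\<Sum>i. hausdorff_approx \<delta> q (A i)) + e" .
qed

lemma hausdorff_approx_Un_le:
  "hausdorff_approx \<delta> q (A \<union> B) \<le> hausdorff_approx \<delta> q A + hausdorff_approx \<delta> q B"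
proof -
  define X where "X = (\<lambda>i::nat. if i = 0 then A else if i = 1 then B else {})"
  have "A \<union> B = (\<Union>i. X i)"
    by (auto simp: X_def split: if_splits)
  then have "hausdorff_approx \<delta> q (A \<union> B) \<le> (\<Sum>i. hausdorff_approx \<delta> q (X i))"
    by (simp add: hausdorff_approx_countable_subadditive)
  also have "\<dots> = (\<Sum>i\<in>{0,1}. hausdorff_approx \<delta> q (X i))"
    by (rule suminf_finite) (auto simp: X_def)
  finally show ?thesis by (simp add: X_def)
qed

lemma hausdorff_approx_finite_UN_le:
  "finite K \<Longrightarrow> hausdorff_approx \<delta> q (\<Union>k\<in>K. X k) \<le> (\<Sum>k\<in>K. hausdorff_approx \<delta> q (X k))"
proof (induction K rule: finite_induct)
  case (insert k K)
  then show ?case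
    using hausdorff_approx_Un_le[of \<delta> q "X k" "\<Union>k\<in>K. X k"] by (auto intro: order_trans add_left_mono)
qed simp

lemma hausdorff_approx_zero_dim_ge_1:
  assumes "P \<noteq> {}"
  shows "1 \<le> hausdorff_approx \<delta> 0 P"
  unfolding hausdorff_approx_def
proof (rule INF_greatest)
  fix C :: "nat \<Rightarrow> 'a set" assume "C \<in> {C. P \<subseteq> (\<Union>j. C j) \<and> (\<forall>j. ediam (C j) \<le> \<delta>)}"
  then obtain j where "C j \<noteq> {}" using assms by blast
  then have "hcontrib 0 (C j) = 1" by (simp add: hcontrib_def)
  then show "1 \<le> (\<Sum>j. hcontrib 0 (C j))"
    using ennreal_term_le_suminf[of "\<lambda>j. hcontrib 0 (C j)" j] by simp
qed

lemma hausdorff_content_le_of_dist_le: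
  fixes A :: "'a::metric_space set"
  assumes "q > 0" "\<And>x y. x \<in> A \<Longrightarrow> y \<in> A \<Longrightarrow> dist x y \<le> d"
  shows "hausdorff_content q A \<le> ennreal (alpha_q q * (d/2) powr q)"
  unfolding hausdorff_content_def
  using hausdorff_approx_le_hcontrib[of A A \<infinity> q] hcontrib_le_of_dist_le[of q A d] assms
  by (auto intro: order_trans)

lemma hausdorff_approx_le_hausdorff_measure:
  "\<delta> > 0 \<Longrightarrow> hausdorff_approx (ennreal \<delta>) q E \<le> hausdorff_measure q E"
  unfolding hausdorff_measure_def by (rule SUP_upper) auto

lemma hausdorff_measure_leI:
  "(\<And>\<delta>. \<delta> > 0 \<Longrightarrow> hausdorff_approx (ennreal \<delta>) q E \<le> x) \<Longrightarrow> hausdorff_measure q E \<le> x"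
  unfolding hausdorff_measure_def by (auto intro: SUP_least)

lemma hausdorff_measure_mono: "E \<subseteq> F \<Longrightarrow> hausdorff_measure q E \<le> hausdorff_measure q F"
  unfolding hausdorff_measure_def by (intro SUP_mono) (auto intro: hausdorff_approx_mono)

lemma hausdorff_measure_countable_subadditive:
  "hausdorff_measure q (\<Union>i. A i) \<le> (\<Sum>i. hausdorff_measure q (A i))"
proof (rule hausdorff_measure_leI)
  fix \<delta> :: real assume "\<delta> > 0"
  have "hausdorff_approx \<delta> q (\<Union>i. A i) \<le> (\<Sum>i. hausdorff_approx \<delta> q (A i))"
    by (rule hausdorff_approx_countable_subadditive)
  also have "\<dots> \<le> (\<Sum>i. hausdorff_measure q (A i))"
    using \<open>\<delta> > 0\<close> by (intro suminf_le hausdorff_approx_le_hausdorff_measure) auto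
  finally show "hausdorff_approx \<delta> q (\<Union>i. A i) \<le> (\<Sum>i. hausdorff_measure q (A i))" .
qed

lemma hausdorff_measure_Un_le:
  "hausdorff_measure q (A \<union> B) \<le> hausdorff_measure q A + hausdorff_measure q B"
proof (rule hausdorff_measure_leI)
  fix \<delta> :: real assume "\<delta> > 0"
  have "hausdorff_approx \<delta> q (A \<union> B) \<le> hausdorff_approx \<delta> q A + hausdorff_approx \<delta> q B"
    by (rule hausdorff_approx_Un_le)
  also have "\<dots> \<le> hausdorff_measure q A + hausdorff_measure q B"
    using \<open>\<delta> > 0\<close> by (intro add_mono hausdorff_approx_le_hausdorff_measure)
  finally show "hausdorff_approx \<delta> q (A \<union> B) \<le> hausdorff_measure q A + hausdorff_measure q B" .
qed

lemma ediam_le_if_hcontrib_less: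
  fixes A :: "'a::metric_space set"
  assumes "q > 0" "\<delta> \<ge> 0" "hcontrib q A < ennreal (alpha_q q * (\<delta>/2) powr q)"
  shows "ediam A \<le> ennreal \<delta>"
proof (cases "A = {}")
  case False
  have "bounded A"
  proof (rule ccontr)
    assume "\<not> bounded A"
    then have "hcontrib q A = \<infinity>" using False assms(1) by (simp add: hcontrib_def)
    with assms(3) show False by simp
  qed
  then have "hcontrib q A = ennreal (alpha_q q * (diameter A / 2) powr q)"
    using False assms(1) by (simp add: hcontrib_def)
  then have less: "alpha_q q * (diameter A / 2) powr q < alpha_q q * (\<delta>/2) powr q"
    using assms(3) alpha_q_pos[of q] assms(1) by (simp add: ennreal_less_iff)
  have "diameter A \<le> \<delta>"
  proof (rule ccontr)
    assume "\<not> diameter A \<le> \<delta>"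
    then have "alpha_q q * (\<delta>/2) powr q \<le> alpha_q q * (diameter A / 2) powr q"
      using assms alpha_q_pos[of q] by (intro mult_left_mono powr_mono2) auto
    then show False using less by simp
  qed
  then show ?thesis using \<open>bounded A\<close> by (simp add: ediam_def ennreal_leI)
qed (simp add: ediam_def)

(* The sets of a cover of small total contribution are automatically small. *)
lemma hausdorff_measure_eq_0_if_content_eq_0:
  fixes X :: "'a::metric_space set"
  assumes "q > 0" "hausdorff_content q X = 0"
  shows "hausdorff_measure q X = 0"
proof -
  have "hausdorff_approx (ennreal \<delta>) q X \<le> ennreal e" if "\<delta> > 0" "e > 0" for \<delta> e
  proof -
    define t where "t = min e (alpha_q q * (\<delta>/2) powr q)"
    have "t > 0" using that assms(1) alpha_q_pos[of q] by (simp add: t_def)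
    then have "hausdorff_approx \<infinity> q X < ennreal t"
      using assms(2) by (simp add: hausdorff_content_def)
    then obtain C where C: "X \<subseteq> (\<Union>j. C j)" "(\<Sum>j. hcontrib q (C j)) < ennreal t"
      by (rule hausdorff_approx_lessE)
    have "hcontrib q (C j) < ennreal t" for j
      using ennreal_term_le_suminf[of "\<lambda>j. hcontrib q (C j)" j] C(2) by (rule le_less_trans)
    then have "hcontrib q (C j) < ennreal (alpha_q q * (\<delta>/2) powr q)" for j
      by (rule less_le_trans) (simp add: t_def ennreal_leI)
    then have "ediam (C j) \<le> ennreal \<delta>" for j
      using that by (intro ediam_le_if_hcontrib_less[OF assms(1)]) auto
    then have "hausdorff_approx (ennreal \<delta>) q X \<le> (\<Sum>j. hcontrib q (C j))"
      by (intro hausdorff_approx_le_cover[OF C(1)])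
    also have "\<dots> \<le> ennreal e"
      using C(2) by (rule order.strict_implies_order[THEN order_trans]) (simp add: t_def ennreal_leI)
    finally show ?thesis .
  qed
  note bound = this
  have "hausdorff_measure q X \<le> 0"
  proof (rule hausdorff_measure_leI)
    fix \<delta> :: real assume "\<delta> > 0"
    show "hausdorff_approx (ennreal \<delta>) q X \<le> 0"
    proof (rule ennreal_le_epsilon)
      fix e :: real assume "e > 0"
      show "hausdorff_approx (ennreal \<delta>) q X \<le> 0 + ennreal e"
        using bound[OF \<open>\<delta> > 0\<close> \<open>e > 0\<close>] by (simp only: add_0_left)
    qed
  qed
  then show ?thesis by simp
qed

section \<open>Content of a product with a ball\<close>

definition grid_cell :: "real \<Rightarrow> real^'m \<Rightarrow> ('m \<Rightarrow> int)" where
  "grid_cell s v = (\<lambda>i. \<lfloor>v$i / s\<rfloor>)"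

lemma grid_cells_of_ball:
  fixes y :: "real^'m"
  assumes r: "r > 0" and s: "s > 0"
  obtains K where "finite K" "real (card K) \<le> (2*r/s + 2) ^ CARD('m)"
    "\<And>v. v \<in> ball y r \<Longrightarrow> grid_cell s v \<in> K"
proof -
  define lo where "lo = (\<lambda>i. \<lfloor>(y$i - r)/s\<rfloor>)"
  define hi where "hi = (\<lambda>i. \<lfloor>(y$i + r)/s\<rfloor>)"
  define K where "K = PiE UNIV (\<lambda>i. {lo i .. hi i})"
  have "real (card K) = (\<Prod>i\<in>UNIV. real (card {lo i .. hi i}))"
    unfolding K_def by (simp add: card_PiE)
  also have "\<dots> \<le> (\<Prod>i\<in>(UNIV::'m set). 2*r/s + 2)"
  proof (rule prod_mono)
    fix i :: 'm
    have "real_of_int (hi i) \<le> (y$i + r)/s" unfolding hi_def by (rule of_int_floor_le)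
    moreover have "(y$i - r)/s < real_of_int (lo i) + 1"
      unfolding lo_def by (rule real_of_int_floor_add_one_gt)
    moreover have "(y$i + r)/s - (y$i - r)/s = 2*r/s" using s by (simp add: field_simps)
    moreover have "lo i \<le> hi i" unfolding lo_def hi_def using r s
      by (intro floor_mono divide_right_mono) auto
    ultimately show "0 \<le> real (card {lo i .. hi i}) \<and> real (card {lo i .. hi i}) \<le> 2*r/s + 2"
      by simp
  qed
  finally have "real (card K) \<le> (2*r/s + 2) ^ CARD('m)" by simp
  moreover have "grid_cell s v \<in> K" if "v \<in> ball y r" for v
  proof -
    have close: "\<bar>y$i - v$i\<bar> < r" for i
      using that component_le_norm_cart[of "y - v" i] by (simp add: dist_norm)
    have "y$i - r \<le> v$i \<and> v$i \<le> y$i + r" for i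
      using close[of i] by (auto simp: abs_less_iff)
    then have "lo i \<le> \<lfloor>v$i / s\<rfloor> \<and> \<lfloor>v$i / s\<rfloor> \<le> hi i" for i
      unfolding lo_def hi_def using s by (auto intro!: floor_mono divide_right_mono)
    then show ?thesis unfolding K_def grid_cell_def by auto
  qed
  moreover have "finite K" unfolding K_def by (intro finite_PiE) auto
  ultimately show ?thesis using that by blast
qed

lemma dist_le_if_grid_cell_eq:
  fixes v w :: "real^'m"
  assumes "grid_cell s v = grid_cell s w" "s > 0"
  shows "dist v w \<le> real CARD('m) * s"
proof -
  have "\<bar>v$i - w$i\<bar> \<le> s" for i
  proof -
    have "\<lfloor>v$i / s\<rfloor> = \<lfloor>w$i / s\<rfloor>" using assms(1) unfolding grid_cell_def by meson
    then have "\<bar>v$i / s - w$i / s\<bar> < 1"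
      using floor_correct[of "v$i / s"] floor_correct[of "w$i / s"] by linarith
    then show ?thesis using assms(2) by (simp add: diff_divide_distrib[symmetric] abs_divide)
  qed
  then have "(\<Sum>i\<in>UNIV. \<bar>(v - w)$i\<bar>) \<le> real CARD('m) * s"
    using sum_bounded_above[of UNIV "\<lambda>i. \<bar>(v - w)$i\<bar>" s] by simp
  then show ?thesis using norm_le_l1_cart[of "v - w"] by (simp add: dist_norm)
qed

lemma hausdorff_content_Times_ball_le:
  fixes A :: "'a::metric_space set" and y :: "real^'m"
  assumes A: "\<And>a b. a \<in> A \<Longrightarrow> b \<in> A \<Longrightarrow> dist a b \<le> d" and "r > 0" "s > 0" "q > 0"
  shows "hausdorff_content q (A \<times> ball y r) \<le>
    ennreal ((2*r/s + 2) ^ CARD('m) * (alpha_q q * ((d + real CARD('m) * s)/2) powr q))"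
proof -
  obtain K where K: "finite K" "real (card K) \<le> (2*r/s + 2) ^ CARD('m)"
    "\<And>v. v \<in> ball y r \<Longrightarrow> grid_cell s v \<in> K"
    using grid_cells_of_ball[OF \<open>r > 0\<close> \<open>s > 0\<close>] by blast
  define B where "B = alpha_q q * ((d + real CARD('m) * s)/2) powr q"
  have "B \<ge> 0" unfolding B_def using alpha_q_pos[of q] \<open>q > 0\<close> by simp
  have cell: "hausdorff_content q (A \<times> {v. grid_cell s v = k}) \<le> ennreal B" for k :: "'m \<Rightarrow> int"
    unfolding B_def
  proof (rule hausdorff_content_le_of_dist_le[OF \<open>q > 0\<close>])
    fix p p' assume "p \<in> A \<times> {v. grid_cell s v = k}" "p' \<in> A \<times> {v. grid_cell s v = k}"
    then obtain a v b w where p: "p = (a, v)" "p' = (b, w)" "a \<in> A" "b \<in> A" "grid_cell s v = grid_cell s w"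
      by auto
    have "dist p p' \<le> dist a b + dist v w"
      unfolding p by (simp add: dist_Pair_Pair sqrt_sum_squares_le_sum)
    also have "\<dots> \<le> d + real CARD('m) * s"
      using A[OF p(3,4)] dist_le_if_grid_cell_eq[OF p(5) \<open>s > 0\<close>] by simp
    finally show "dist p p' \<le> d + real CARD('m) * s" .
  qed
  have "A \<times> ball y r \<subseteq> (\<Union>k\<in>K. A \<times> {v. grid_cell s v = k})" using K(3) by auto
  then have "hausdorff_content q (A \<times> ball y r) \<le>
      hausdorff_content q (\<Union>k\<in>K. A \<times> {v. grid_cell s v = k})"
    unfolding hausdorff_content_def by (rule hausdorff_approx_mono)
  also have "\<dots> \<le> (\<Sum>k\<in>K. hausdorff_content q (A \<times> {v. grid_cell s v = k}))"
    unfolding hausdorff_content_def by (rule hausdorff_approx_finite_UN_le[OF K(1)])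
  also have "\<dots> \<le> (\<Sum>k\<in>K. ennreal B)" by (intro sum_mono cell)
  also have "\<dots> = ennreal (real (card K) * B)"
    using \<open>B \<ge> 0\<close> by (simp add: ennreal_mult ennreal_of_nat_eq_real_of_nat)
  also have "\<dots> \<le> ennreal ((2*r/s + 2) ^ CARD('m) * B)"
    using K(2) \<open>B \<ge> 0\<close> by (intro ennreal_leI mult_right_mono) auto
  finally show ?thesis unfolding B_def .
qed

definition projection_const :: "real \<Rightarrow> nat \<Rightarrow> real" where
  "projection_const q M = alpha_q q * (2 * real M + 4) ^ M * 2 powr q / alpha_q (q - real M)"

lemma projection_const_pos: "real M \<le> q \<Longrightarrow> projection_const q M > 0"
  unfolding projection_const_def using alpha_q_pos[of q] alpha_q_pos[of "q - real M"]
  by (intro divide_pos_pos mult_pos_pos) auto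

lemma hausdorff_content_Times_ball_le_diameter:
  fixes A :: "'a::metric_space set" and y :: "real^'m"
  assumes A: "\<And>a b. a \<in> A \<Longrightarrow> b \<in> A \<Longrightarrow> dist a b \<le> d" and d: "0 < d" "d \<le> 2 * r"
    and q: "real CARD('m) < q"
  shows "hausdorff_content q (A \<times> ball y r) \<le> ennreal (projection_const q CARD('m) * r ^ CARD('m) *
    (alpha_q (q - real CARD('m)) * (d/2) powr (q - real CARD('m))))"
proof -
  define M where "M = CARD('m)"
  have "M \<ge> 1" "r > 0" using d by (auto simp: M_def Suc_le_eq)
  have "alpha_q q > 0" "alpha_q (q - M) > 0" using q by (auto simp: M_def intro!: alpha_q_pos)
  have grid: "hausdorff_content q (A \<times> ball y r) \<le>
      ennreal ((2*r/(d/M) + 2) ^ M * (alpha_q q * ((d + M * (d/M))/2) powr q))"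
    using hausdorff_content_Times_ball_le[of A d r "d/M" q y] A d q \<open>M \<ge> 1\<close> \<open>r > 0\<close>
    by (simp add: M_def)
  have "(2*r/(d/M) + 2) ^ M * (alpha_q q * ((d + M * (d/M))/2) powr q) =
      (2 * M * r / d + 2) ^ M * (alpha_q q * d powr q)"
    using \<open>M \<ge> 1\<close> by (simp add: ac_simps)
  also have "\<dots> \<le> ((2 * M + 4) * r / d) ^ M * (alpha_q q * d powr q)"
    using d \<open>alpha_q q > 0\<close> \<open>r > 0\<close>
    by (intro mult_right_mono power_mono) (auto simp: field_simps)
  also have "\<dots> = alpha_q q * (2 * M + 4) ^ M * r ^ M * d powr (q - M)"
  proof -
    have "d powr q = d ^ M * d powr (q - M)"
      using d by (simp add: powr_realpow[symmetric] powr_add[symmetric])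
    then show ?thesis unfolding power_divide power_mult_distrib using d by (simp add: field_simps)
  qed
  also have "d powr (q - M) = 2 powr (q - M) * (d/2) powr (q - M)"
    using d by (simp add: powr_divide)
  also have "alpha_q q * (2 * M + 4) ^ M * r ^ M * (2 powr (q - M) * (d/2) powr (q - M)) \<le>
      alpha_q q * (2 * M + 4) ^ M * r ^ M * (2 powr q * (d/2) powr (q - M))"
    using \<open>alpha_q q > 0\<close> \<open>r > 0\<close> by (intro mult_left_mono mult_right_mono) auto
  also have "\<dots> = projection_const q M * r ^ M * (alpha_q (q - M) * (d/2) powr (q - M))"
    unfolding projection_const_def using \<open>alpha_q (q - M) > 0\<close> by (simp add: field_simps)
  finally have "(2*r/(d/M) + 2) ^ M * (alpha_q q * ((d + M * (d/M))/2) powr q) \<le>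
      projection_const q M * r ^ M * (alpha_q (q - M) * (d/2) powr (q - M))" .
  then show ?thesis unfolding M_def[symmetric] by (rule order_trans[OF grid ennreal_leI])
qed

lemma hausdorff_content_singleton_Times_ball:
  fixes a :: "'a::metric_space" and y :: "real^'m"
  assumes "r > 0" "real CARD('m) < q"
  shows "hausdorff_content q ({a} \<times> ball y r) = 0"
proof -
  define M where "M = CARD('m)"
  define c where "c = alpha_q q * (4 * r) ^ M * real M powr q"
  have "M \<ge> 1" by (simp add: M_def Suc_le_eq)
  have "q > 0" using assms(2) of_nat_0_le_iff le_less_trans by blast
  have bound: "hausdorff_content q ({a} \<times> ball y r) \<le> ennreal (c * s powr (q - M))"
    if s: "0 < s" "s < r" for s
  proof -
    have "hausdorff_content q ({a} \<times> ball y r) \<le>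
        ennreal ((2*r/s + 2) ^ M * (alpha_q q * ((0 + M * s)/2) powr q))"
      using hausdorff_content_Times_ball_le[of "{a}" 0 r s q y] assms s \<open>q > 0\<close> by (simp add: M_def)
    also have "\<dots> \<le> ennreal (c * s powr (q - M))"
    proof (rule ennreal_leI)
      have "(2*r/s + 2) ^ M \<le> (4*r/s) ^ M"
        using s by (intro power_mono) (auto simp: field_simps)
      moreover have "((0 + M * s)/2) powr q \<le> (M * s) powr q"
        using s \<open>q > 0\<close> by (intro powr_mono2) auto
      ultimately have "(2*r/s + 2) ^ M * (alpha_q q * ((0 + M * s)/2) powr q) \<le>
          (4*r/s) ^ M * (alpha_q q * (M * s) powr q)"
        using alpha_q_pos[of q] \<open>q > 0\<close> s by (intro mult_mono mult_left_mono) auto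
      also have "\<dots> = c * s powr (q - M)"
      proof -
        have "s powr q = s ^ M * s powr (q - M)"
          using s by (simp add: powr_realpow[symmetric] powr_add[symmetric])
        then show ?thesis
          unfolding c_def power_divide power_mult_distrib using s by (simp add: powr_mult field_simps)
      qed
      finally show "(2*r/s + 2) ^ M * (alpha_q q * ((0 + M * s)/2) powr q) \<le> c * s powr (q - M)" .
    qed
    finally show ?thesis .
  qed
  have "eventually (\<lambda>s. 0 \<le> s) (at_right (0::real))"
    using eventually_at_right_less[of "0::real"] by eventually_elim simp
  then have "((\<lambda>s. ennreal (c * s powr (q - M))) \<longlongrightarrow> ennreal (c * 0)) (at_right 0)"
    using assms(2) unfolding M_def
    by (intro tendsto_ennrealI tendsto_mult_left tendsto_zero_powrI tendsto_ident_at tendsto_const) auto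
  moreover have "eventually (\<lambda>s. hausdorff_content q ({a} \<times> ball y r) \<le> ennreal (c * s powr (q - M))) (at_right 0)"
    using eventually_at_right_real[OF \<open>r > 0\<close>] by eventually_elim (auto intro: bound)
  ultimately have "hausdorff_content q ({a} \<times> ball y r) \<le> ennreal (c * 0)"
    by (rule tendsto_le[OF trivial_limit_at_right_real _ tendsto_const])
  then show ?thesis by simp
qed

lemma hausdorff_content_Times_ball_le_hcontrib:
  fixes A :: "'a::metric_space set" and y :: "real^'m"
  assumes A: "A \<subseteq> ball x r" and "r > 0" and q: "real CARD('m) < q"
  shows "hausdorff_content q (A \<times> ball y r) \<le>
    ennreal (projection_const q CARD('m) * r ^ CARD('m)) * hcontrib (q - real CARD('m)) A"
proof (cases "A = {}")
  case False
  have "bounded A" using A bounded_ball bounded_subset by blast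
  define d where "d = diameter A"
  have dist: "dist a b \<le> d" if "a \<in> A" "b \<in> A" for a b
    unfolding d_def using diameter_bounded_bound[OF \<open>bounded A\<close> that] .
  have "0 \<le> d" unfolding d_def using \<open>bounded A\<close> by (rule diameter_ge_0)
  have "d \<le> 2 * r"
    unfolding d_def using False
  proof (rule diameter_le_of_dist_le)
    fix a b assume "a \<in> A" "b \<in> A"
    then have "dist x a < r" "dist x b < r" using A by auto
    then show "dist a b \<le> 2 * r" using dist_triangle[of a b x] by (simp add: dist_commute)
  qed
  have hc: "hcontrib (q - real CARD('m)) A =
      ennreal (alpha_q (q - real CARD('m)) * (d/2) powr (q - real CARD('m)))"
    using False \<open>bounded A\<close> q unfolding hcontrib_def d_def by simp
  show ?thesis
  proof (cases "d = 0")
    case True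
    obtain a where "a \<in> A" using False by blast
    then have "A = {a}" using dist True by fastforce
    then have "hausdorff_content q (A \<times> ball y r) = 0"
      using hausdorff_content_singleton_Times_ball[OF \<open>r > 0\<close> q] by blast
    then show ?thesis by simp
  next
    case False
    then have "hausdorff_content q (A \<times> ball y r) \<le> ennreal (projection_const q CARD('m) * r ^ CARD('m) *
        (alpha_q (q - real CARD('m)) * (d/2) powr (q - real CARD('m))))"
      using \<open>0 \<le> d\<close> \<open>d \<le> 2 * r\<close> by (intro hausdorff_content_Times_ball_le_diameter[OF dist _ _ q]) auto
    also have "\<dots> = ennreal (projection_const q CARD('m) * r ^ CARD('m)) * hcontrib (q - real CARD('m)) A"
      unfolding hc using projection_const_pos[of "CARD('m)" q] q \<open>r > 0\<close>
        alpha_q_pos[of "q - real CARD('m)"]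
      by (subst ennreal_mult) auto
    finally show ?thesis .
  qed
qed (simp add: hausdorff_content_def)

lemma hausdorff_content_le_projection_cover:
  fixes T :: "('a::metric_space \<times> (real^'m)) set"
  assumes T: "T \<subseteq> ball z r" and "r > 0" and q: "real CARD('m) < q" and C: "fst ` T \<subseteq> (\<Union>j. C j)"
  shows "hausdorff_content q T \<le>
    ennreal (projection_const q CARD('m) * r ^ CARD('m)) * (\<Sum>j. hcontrib (q - real CARD('m)) (C j))"
proof -
  define c where "c = ennreal (projection_const q CARD('m) * r ^ CARD('m))"
  define Y where "Y j = (C j \<inter> fst ` T) \<times> ball (snd z) r" for j
  have "T \<subseteq> (\<Union>j. Y j)"
  proof
    fix t assume t: "t \<in> T"
    then obtain j where "fst t \<in> C j" using C by blast
    moreover have "dist (snd z) (snd t) < r" using t T dist_snd_le[of z t] by fastforce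
    ultimately show "t \<in> (\<Union>j. Y j)" using t unfolding Y_def
      by (intro UN_I[of j]) (auto intro!: mem_Times_iff[THEN iffD2])
  qed
  then have "hausdorff_content q T \<le> hausdorff_content q (\<Union>j. Y j)"
    unfolding hausdorff_content_def by (rule hausdorff_approx_mono)
  also have "\<dots> \<le> (\<Sum>j. hausdorff_content q (Y j))"
    unfolding hausdorff_content_def by (rule hausdorff_approx_countable_subadditive)
  also have "\<dots> \<le> (\<Sum>j. c * hcontrib (q - real CARD('m)) (C j))"
  proof (intro suminf_le allI)
    fix j
    have "C j \<inter> fst ` T \<subseteq> ball (fst z) r"
    proof
      fix a assume "a \<in> C j \<inter> fst ` T"
      then obtain t where "t \<in> T" "a = fst t" by auto
      then show "a \<in> ball (fst z) r" using T dist_fst_le[of z t] by auto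
    qed
    then have "hausdorff_content q (Y j) \<le> c * hcontrib (q - real CARD('m)) (C j \<inter> fst ` T)"
      unfolding Y_def c_def by (rule hausdorff_content_Times_ball_le_hcontrib[OF _ \<open>r > 0\<close> q])
    also have "\<dots> \<le> c * hcontrib (q - real CARD('m)) (C j)"
      using q by (intro mult_left_mono hcontrib_mono) auto
    finally show "hausdorff_content q (Y j) \<le> c * hcontrib (q - real CARD('m)) (C j)" .
  qed auto
  also have "\<dots> = c * (\<Sum>j. hcontrib (q - real CARD('m)) (C j))" by (rule ennreal_suminf_cmult)
  finally show ?thesis unfolding c_def .
qed

lemma hausdorff_content_le_projection:
  fixes T :: "('a::metric_space \<times> (real^'m)) set"
  assumes T: "T \<subseteq> ball z r" and "r > 0" and q: "real CARD('m) \<le> q"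
  shows "hausdorff_content q T \<le>
    ennreal (projection_const q CARD('m) * r ^ CARD('m)) * hausdorff_content (q - real CARD('m)) (fst ` T)"
proof (cases "q = real CARD('m)")
  case True
  show ?thesis
  proof (cases "T = {}")
    case False
    have "hausdorff_content q T \<le> ennreal (alpha_q q * (2 * r / 2) powr q)"
    proof (rule hausdorff_content_le_of_dist_le)
      show "q > 0" using True by simp
      fix a b assume "a \<in> T" "b \<in> T"
      then have "dist z a < r" "dist z b < r" using T by auto
      then show "dist a b \<le> 2 * r" using dist_triangle[of a b z] by (simp add: dist_commute)
    qed
    also have "\<dots> \<le> ennreal (projection_const q CARD('m) * r ^ CARD('m))"
    proof (rule ennreal_leI)
      have "1 \<le> (2 * real CARD('m) + 4) ^ CARD('m)" "1 \<le> 2 powr q"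
        using True by (auto intro: ge_one_powr_ge_zero)
      then have "1 \<le> (2 * real CARD('m) + 4) ^ CARD('m) * 2 powr q"
        using mult_mono[of 1 _ 1] by fastforce
      moreover have "alpha_q (q - real CARD('m)) = 1" using True by (simp add: alpha_q_def)
      ultimately have "alpha_q q \<le> projection_const q CARD('m)"
        unfolding projection_const_def using alpha_q_pos[of q] True by (simp add: mult.assoc)
      then show "alpha_q q * (2 * r / 2) powr q \<le> projection_const q CARD('m) * r ^ CARD('m)"
        using True \<open>r > 0\<close> by (simp add: powr_realpow)
    qed
    also have "\<dots> = ennreal (projection_const q CARD('m) * r ^ CARD('m)) * 1" by simp
    also have "\<dots> \<le> ennreal (projection_const q CARD('m) * r ^ CARD('m)) *
        hausdorff_content (q - real CARD('m)) (fst ` T)"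
      using hausdorff_approx_zero_dim_ge_1[of "fst ` T" \<infinity>] False True
      by (intro mult_left_mono) (auto simp: hausdorff_content_def)
    finally show ?thesis .
  qed (simp add: hausdorff_content_def)
next
  case False
  then have "real CARD('m) < q" using q by simp
  then show ?thesis
    unfolding hausdorff_content_def[of "q - real CARD('m)"]
    using projection_const_pos[OF q] \<open>r > 0\<close>
    by (intro le_mult_hausdorff_approxI hausdorff_content_le_projection_cover[OF T \<open>r > 0\<close>]) auto
qed

section \<open>Points of low density\<close>

definition density_threshold :: "real \<Rightarrow> real" where
  "density_threshold q = alpha_q q / (2 * 4 powr q)"

definition low_density_points :: "real \<Rightarrow> 'a::metric_space set \<Rightarrow> 'a set" where
  "low_density_points q S = {z \<in> S. \<exists>r0>0. \<forall>r. 0 < r \<and> r < r0 \<longrightarrow>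
     hausdorff_content q (S \<inter> ball z r) \<le> ennreal (density_threshold q * r powr q)}"

lemma density_threshold_mult_powr:
  "\<delta> > 0 \<Longrightarrow> density_threshold q * (2 * \<delta>) powr q = 1/2 * (alpha_q q * (\<delta>/2) powr q)"
proof -
  assume "\<delta> > 0"
  then have "(2 * \<delta>) powr q = 4 powr q * (\<delta>/2) powr q" by (simp add: powr_mult[symmetric])
  then show ?thesis by (simp add: density_threshold_def field_simps)
qed

lemma hausdorff_content_le_half_hcontrib:
  fixes D S :: "'a::metric_space set"
  assumes "q > 0" "D \<subseteq> S" and dist: "\<And>a b. a \<in> D \<Longrightarrow> b \<in> D \<Longrightarrow> dist a b \<le> \<rho>" and "2 * \<rho> < r0"
    and low: "\<And>z r. z \<in> D \<Longrightarrow> 0 < r \<Longrightarrow> r < r0 \<Longrightarrow>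
      hausdorff_content q (S \<inter> ball z r) \<le> ennreal (density_threshold q * r powr q)"
  shows "hausdorff_content q D \<le> ennreal (1/2) * hcontrib q D"
proof (cases "D = {}")
  case False
  have "bounded D" using dist by (rule bounded_of_dist_le)
  define \<delta> where "\<delta> = diameter D"
  have hc: "hcontrib q D = ennreal (alpha_q q * (\<delta>/2) powr q)"
    using False \<open>bounded D\<close> assms(1) by (simp add: hcontrib_def \<delta>_def)
  have "0 \<le> \<delta>" unfolding \<delta>_def using \<open>bounded D\<close> by (rule diameter_ge_0)
  have "\<delta> \<le> \<rho>" unfolding \<delta>_def using False dist by (rule diameter_le_of_dist_le)
  show ?thesis
  proof (cases "\<delta> = 0")
    case True
    have "hausdorff_content q D \<le> hcontrib q D"
      unfolding hausdorff_content_def by (rule hausdorff_approx_le_hcontrib) auto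
    also have "hcontrib q D = 0" using hc True assms(1) by simp
    finally show ?thesis by simp
  next
    case False
    then have "\<delta> > 0" using \<open>0 \<le> \<delta>\<close> by simp
    obtain z where "z \<in> D" using \<open>D \<noteq> {}\<close> by blast
    have "D \<subseteq> S \<inter> ball z (2 * \<delta>)"
    proof
      fix x assume "x \<in> D"
      then have "dist z x \<le> \<delta>"
        unfolding \<delta>_def using \<open>z \<in> D\<close> \<open>bounded D\<close> by (intro diameter_bounded_bound)
      then show "x \<in> S \<inter> ball z (2 * \<delta>)" using \<open>x \<in> D\<close> assms(2) \<open>\<delta> > 0\<close> by auto
    qed
    then have "hausdorff_content q D \<le> hausdorff_content q (S \<inter> ball z (2 * \<delta>))"
      unfolding hausdorff_content_def by (rule hausdorff_approx_mono)
    also have "\<dots> \<le> ennreal (density_threshold q * (2 * \<delta>) powr q)"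
      using \<open>z \<in> D\<close> \<open>\<delta> > 0\<close> \<open>\<delta> \<le> \<rho>\<close> assms(4) by (intro low) auto
    also have "density_threshold q * (2 * \<delta>) powr q = 1/2 * (alpha_q q * (\<delta>/2) powr q)"
      using \<open>\<delta> > 0\<close> by (rule density_threshold_mult_powr)
    also have "ennreal (1/2 * (alpha_q q * (\<delta>/2) powr q)) = ennreal (1/2) * hcontrib q D"
      unfolding hc using alpha_q_pos[of q] assms(1) by (intro ennreal_mult) auto
    finally show ?thesis .
  qed
qed (simp add: hausdorff_content_def)

(* Each piece C j \<inter> A of a cover has content at most half its contribution, so the content
   of A is at most half of itself. *)
lemma hausdorff_content_eq_0_if_low_density:
  fixes A S :: "'a::metric_space set"
  assumes "q > 0" "A \<subseteq> S" and dist: "\<And>a b. a \<in> A \<Longrightarrow> b \<in> A \<Longrightarrow> dist a b \<le> \<rho>" and "2 * \<rho> < r0"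
    and low: "\<And>z r. z \<in> A \<Longrightarrow> 0 < r \<Longrightarrow> r < r0 \<Longrightarrow>
      hausdorff_content q (S \<inter> ball z r) \<le> ennreal (density_threshold q * r powr q)"
  shows "hausdorff_content q A = 0"
proof -
  have "hausdorff_content q A \<le> ennreal (alpha_q q * (\<rho>/2) powr q)"
    using assms(1) dist by (rule hausdorff_content_le_of_dist_le)
  then obtain x where x: "hausdorff_content q A = ennreal x" "0 \<le> x"
    by (cases "hausdorff_content q A") (auto simp: top_unique)
  have half: "0 < ennreal (1/2)" "ennreal (1/2) < top"
    by (simp_all only: ennreal_less_zero_iff ennreal_less_top)
  have "hausdorff_content q A \<le> ennreal (1/2) * hausdorff_approx \<infinity> q A"
  proof (rule le_mult_hausdorff_approxI[OF half])
    fix C :: "nat \<Rightarrow> 'a set" assume "A \<subseteq> (\<Union>j. C j)"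
    then have "A \<subseteq> (\<Union>j. C j \<inter> A)" by blast
    then have "hausdorff_content q A \<le> hausdorff_content q (\<Union>j. C j \<inter> A)"
      unfolding hausdorff_content_def by (rule hausdorff_approx_mono)
    also have "\<dots> \<le> (\<Sum>j. hausdorff_content q (C j \<inter> A))"
      unfolding hausdorff_content_def by (rule hausdorff_approx_countable_subadditive)
    also have "\<dots> \<le> (\<Sum>j. ennreal (1/2) * hcontrib q (C j))"
    proof (intro suminf_le allI)
      fix j
      have "hausdorff_content q (C j \<inter> A) \<le> ennreal (1/2) * hcontrib q (C j \<inter> A)"
        using assms(2) dist by (intro hausdorff_content_le_half_hcontrib[OF assms(1) _ _ assms(4) low]) auto
      also have "\<dots> \<le> ennreal (1/2) * hcontrib q (C j)"
        using assms(1) by (intro mult_left_mono hcontrib_mono) auto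
      finally show "hausdorff_content q (C j \<inter> A) \<le> ennreal (1/2) * hcontrib q (C j)" .
    qed auto
    also have "\<dots> = ennreal (1/2) * (\<Sum>j. hcontrib q (C j))" by (rule ennreal_suminf_cmult)
    finally show "hausdorff_content q A \<le> ennreal (1/2) * (\<Sum>j. hcontrib q (C j))" .
  qed
  then have "ennreal x \<le> ennreal (1/2) * ennreal x"
    unfolding hausdorff_content_def[symmetric] x(1) .
  also have "\<dots> = ennreal (1/2 * x)" by (rule ennreal_mult[symmetric]) (use x in auto)
  finally have "x \<le> 1/2 * x" using x by (subst (asm) ennreal_le_iff) auto
  then have "x = 0" using x by simp
  then show ?thesis using x by simp
qed

lemma hausdorff_measure_low_density_points:
  fixes S :: "'a::{metric_space, second_countable_topology} set"
  assumes "q > 0"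
  shows "hausdorff_measure q (low_density_points q S) = 0"
proof -
  obtain D :: "'a set" where D: "countable D" "\<And>X. open X \<Longrightarrow> X \<noteq> {} \<Longrightarrow> \<exists>d\<in>D. d \<in> X"
    using countable_dense_exists by blast
  define B where "B k = {z \<in> S. \<forall>r. 0 < r \<and> r < 1 / Suc k \<longrightarrow>
     hausdorff_content q (S \<inter> ball z r) \<le> ennreal (density_threshold q * r powr q)}" for k :: nat
  define P where "P k i = B k \<inter> ball (from_nat_into D i) (1 / (8 * Suc k))" for k i :: nat
  have P_null: "hausdorff_content q (P k i) = 0" for k i
  proof (rule hausdorff_content_eq_0_if_low_density[OF assms])
    show "P k i \<subseteq> S" unfolding P_def B_def by auto
    show "dist a b \<le> 2 / (8 * Suc k)" if "a \<in> P k i" "b \<in> P k i" for a b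
      using that dist_triangle[of a b "from_nat_into D i"] unfolding P_def by (auto simp: dist_commute)
    show "2 * (2 / (8 * Suc k)) < 1 / Suc k" by (simp add: field_simps)
    show "hausdorff_content q (S \<inter> ball z r) \<le> ennreal (density_threshold q * r powr q)"
      if "z \<in> P k i" "0 < r" "r < 1 / Suc k" for z r
      using that unfolding P_def B_def by simp
  qed
  have "low_density_points q S \<subseteq> (\<Union>k. \<Union>i. P k i)"
  proof
    fix z assume "z \<in> low_density_points q S"
    then obtain r0 where "r0 > 0" "z \<in> S" and low: "\<And>r. 0 < r \<Longrightarrow> r < r0 \<Longrightarrow>
      hausdorff_content q (S \<inter> ball z r) \<le> ennreal (density_threshold q * r powr q)"
      unfolding low_density_points_def by blast
    obtain k where "1 / Suc k < r0" using reals_Archimedean[OF \<open>r0 > 0\<close>] by (auto simp: inverse_eq_divide)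
    then have "z \<in> B k" using \<open>z \<in> S\<close> low unfolding B_def by auto
    obtain d where "d \<in> D" "d \<in> ball z (1 / (8 * Suc k))" using D(2)[of "ball z (1 / (8 * Suc k))"] by auto
    moreover obtain i where "from_nat_into D i = d" using from_nat_into_surj[OF D(1) \<open>d \<in> D\<close>] by blast
    ultimately show "z \<in> (\<Union>k. \<Union>i. P k i)"
      using \<open>z \<in> B k\<close> unfolding P_def by (intro UN_I[of k] UN_I[of i]) (auto simp: dist_commute)
  qed
  then have "hausdorff_content q (low_density_points q S) \<le> hausdorff_content q (\<Union>k. \<Union>i. P k i)"
    unfolding hausdorff_content_def by (rule hausdorff_approx_mono)
  also have "\<dots> \<le> (\<Sum>k. \<Sum>i. hausdorff_content q (P k i))"
    unfolding hausdorff_content_def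
    by (intro order_trans[OF hausdorff_approx_countable_subadditive] suminf_le
        hausdorff_approx_countable_subadditive) auto
  also have "\<dots> = 0" by (simp add: P_null)
  finally have "hausdorff_content q (low_density_points q S) = 0" by simp
  then show ?thesis by (rule hausdorff_measure_eq_0_if_content_eq_0[OF assms])
qed

lemma not_low_density_pointE:
  assumes "z \<in> S - low_density_points q S" "r0 > 0"
  obtains r where "0 < r" "r < r0"
    "ennreal (density_threshold q * r powr q) < hausdorff_content q (S \<inter> ball z r)"
  using assms unfolding low_density_points_def by (auto simp: not_le)

lemma high_density_radiusE:
  fixes S :: "('a::metric_space \<times> 'b::metric_space) set"
  assumes "z \<in> S - low_density_points q S" "open U" "fst z \<in> U" "r0 > 0"
  obtains r where "0 < r" "r < r0" "ball (fst z) (4 * r) \<subseteq> U"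
    "ennreal (density_threshold q * r powr q) < hausdorff_content q (S \<inter> ball z r)"
proof -
  obtain e where "e > 0" "ball (fst z) e \<subseteq> U" using assms(2,3) open_contains_ball by blast
  moreover have "min r0 (e/4) > 0" using \<open>e > 0\<close> assms(4) by simp
  then obtain r where "0 < r" "r < min r0 (e/4)"
      "ennreal (density_threshold q * r powr q) < hausdorff_content q (S \<inter> ball z r)"
    by (rule not_low_density_pointE[OF assms(1)])
  moreover have "4 * r \<le> e" using \<open>r < min r0 (e/4)\<close> by simp
  ultimately show ?thesis using subset_ball[of "4 * r" e "fst z"] by (intro that) auto
qed

lemma hausdorff_measure_le_high_density_part:
  fixes S :: "'a::{metric_space, second_countable_topology} set"
  assumes "q > 0"
  shows "hausdorff_measure q S \<le> hausdorff_measure q (S - low_density_points q S)"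
proof -
  have "S \<subseteq> (S - low_density_points q S) \<union> low_density_points q S" by blast
  then have "hausdorff_measure q S \<le>
      hausdorff_measure q ((S - low_density_points q S) \<union> low_density_points q S)"
    by (rule hausdorff_measure_mono)
  also have "\<dots> \<le> hausdorff_measure q (S - low_density_points q S) + hausdorff_measure q (low_density_points q S)"
    by (rule hausdorff_measure_Un_le)
  also have "hausdorff_measure q (low_density_points q S) = 0"
    using assms by (rule hausdorff_measure_low_density_points)
  finally show ?thesis by simp
qed

section \<open>Vitali coverings and integrals\<close>

lemma suminf_nn_integral_le_if_disjoint_supports:
  fixes h :: "nat \<Rightarrow> 'a \<Rightarrow> ennreal"
  assumes "\<And>n. h n \<in> borel_measurable M"
    and "\<And>n m x. h n x \<noteq> 0 \<Longrightarrow> h m x \<noteq> 0 \<Longrightarrow> n = m" and "\<And>n x. h n x \<le> g x"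
  shows "(\<Sum>n. \<integral>\<^sup>+x. h n x \<partial>M) \<le> (\<integral>\<^sup>+x. g x \<partial>M)"
proof -
  have "(\<Sum>n. \<integral>\<^sup>+x. h n x \<partial>M) = (\<integral>\<^sup>+x. (\<Sum>n. h n x) \<partial>M)"
    by (rule nn_integral_suminf[symmetric]) (rule assms(1))
  also have "\<dots> \<le> (\<integral>\<^sup>+x. g x \<partial>M)"
  proof (rule nn_integral_mono)
    fix x
    show "(\<Sum>n. h n x) \<le> g x"
    proof (cases "\<exists>n. h n x \<noteq> 0")
      case True
      then obtain n where "h n x \<noteq> 0" by blast
      then have "(\<Sum>n. h n x) = h n x" using assms(2) by (subst suminf_finite[of "{n}"]) auto
      then show ?thesis using assms(3) by simp
    qed simp
  qed
  finally show ?thesis .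
qed

lemma hausdorff_approx_le_by_Vitali:
  fixes S :: "'a::euclidean_space set" and F :: "'a \<Rightarrow> 'b \<Rightarrow> ennreal"
  assumes rad: "\<And>z. z \<in> S \<Longrightarrow> 0 < \<rho> z \<and> 10 * \<rho> z \<le> \<delta>"
    and hc: "\<And>z. z \<in> S \<Longrightarrow> hcontrib q (ball z (5 * \<rho> z)) \<le> c * (\<integral>\<^sup>+x. F z x \<partial>M)"
    and meas: "\<And>z. z \<in> S \<Longrightarrow> F z \<in> borel_measurable M"
    and disj: "\<And>z w x. z \<in> S \<Longrightarrow> w \<in> S \<Longrightarrow> disjnt (ball z (\<rho> z)) (ball w (\<rho> w)) \<Longrightarrow>
      F z x = 0 \<or> F w x = 0"
    and bound: "\<And>z x. z \<in> S \<Longrightarrow> F z x \<le> g x"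
  shows "hausdorff_approx (ennreal \<delta>) q S \<le> c * (\<integral>\<^sup>+x. g x \<partial>M)"
proof -
  have cover: "S \<subseteq> (\<Union>z\<in>S. ball z (\<rho> z))"
  proof
    fix z assume "z \<in> S"
    then show "z \<in> (\<Union>z\<in>S. ball z (\<rho> z))" using rad[OF \<open>z \<in> S\<close>] by (intro UN_I[of z]) auto
  qed
  have radii: "0 < \<rho> z \<and> \<rho> z \<le> \<delta>" if "z \<in> S" for z using rad[OF that] by linarith
  obtain C where C: "countable C" "C \<subseteq> S"
      "pairwise (\<lambda>i j. disjnt (ball i (\<rho> i)) (ball j (\<rho> j))) C" "S \<subseteq> (\<Union>i\<in>C. ball i (5 * \<rho> i))"
    by (rule Vitali_covering_lemma_balls[where a="\<lambda>z. z" and r=\<rho>, OF cover radii]) auto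
  obtain e :: "nat \<Rightarrow> 'a" and I where I: "C = e ` I" "inj_on e I"
    using C(1) unfolding countable_as_injective_image_subset by blast
  define h where "h n = (if n \<in> I then F (e n) else (\<lambda>_. 0))" for n
  have eS: "e n \<in> S" if "n \<in> I" for n using that I(1) C(2) by blast
  have "hausdorff_approx (ennreal \<delta>) q S \<le>
      (\<Sum>n. if n \<in> I then hcontrib q (ball (e n) (5 * \<rho> (e n))) else 0)"
  proof (rule hausdorff_approx_le_subfamily_cover)
    show "S \<subseteq> (\<Union>n\<in>I. ball (e n) (5 * \<rho> (e n)))" using C(4) unfolding I(1) by blast
    fix n assume "n \<in> I"
    have "dist a b \<le> \<delta>" if "a \<in> ball (e n) (5 * \<rho> (e n))" "b \<in> ball (e n) (5 * \<rho> (e n))" for a b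
      using that rad[OF eS[OF \<open>n \<in> I\<close>]] dist_triangle[of a b "e n"] by (auto simp: dist_commute)
    then show "ediam (ball (e n) (5 * \<rho> (e n))) \<le> ennreal \<delta>"
      using rad[OF eS[OF \<open>n \<in> I\<close>]] by (intro ediam_le_of_dist_le) auto
  qed
  also have "\<dots> \<le> (\<Sum>n. c * (\<integral>\<^sup>+x. h n x \<partial>M))"
    by (intro suminf_le) (auto simp: h_def hc eS)
  also have "\<dots> = c * (\<Sum>n. \<integral>\<^sup>+x. h n x \<partial>M)" by (rule ennreal_suminf_cmult)
  also have "(\<Sum>n. \<integral>\<^sup>+x. h n x \<partial>M) \<le> (\<integral>\<^sup>+x. g x \<partial>M)"
  proof (rule suminf_nn_integral_le_if_disjoint_supports)
    show "h n \<in> borel_measurable M" for n by (simp add: h_def meas eS)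
    show "h n x \<le> g x" for n x by (simp add: h_def bound eS)
    fix n m x assume "h n x \<noteq> 0" "h m x \<noteq> 0"
    then have "n \<in> I" "m \<in> I" "F (e n) x \<noteq> 0" "F (e m) x \<noteq> 0" by (auto simp: h_def split: if_splits)
    show "n = m"
    proof (rule ccontr)
      assume "n \<noteq> m"
      then have "e n \<noteq> e m" using I(2) \<open>n \<in> I\<close> \<open>m \<in> I\<close> by (auto simp: inj_on_def)
      then have "disjnt (ball (e n) (\<rho> (e n))) (ball (e m) (\<rho> (e m)))"
        using C(3) \<open>n \<in> I\<close> \<open>m \<in> I\<close> unfolding I(1) pairwise_def by blast
      then show False using disj[OF eS eS, of n m x] \<open>n \<in> I\<close> \<open>m \<in> I\<close> \<open>F (e n) x \<noteq> 0\<close> \<open>F (e m) x \<noteq> 0\<close>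
        by blast
    qed
  qed
  finally show ?thesis by (simp add: mult_left_mono)
qed

lemma ennreal_integral_le_nn_integral:
  fixes f :: "'a \<Rightarrow> real"
  assumes "integrable M f"
  shows "ennreal (integral\<^sup>L M f) \<le> (\<integral>\<^sup>+x. ennreal (f x) \<partial>M)"
proof -
  have "integral\<^sup>L M f \<le> integral\<^sup>L M (\<lambda>x. max (f x) 0)" using assms by (intro integral_mono) auto
  also have "\<dots> = enn2real (\<integral>\<^sup>+x. ennreal (max (f x) 0) \<partial>M)"
    using assms by (intro integral_eq_nn_integral) auto
  also have "(\<lambda>x. ennreal (max (f x) 0)) = (\<lambda>x. ennreal (f x))"
    by (auto simp: max_def ennreal_neg fun_eq_iff)
  finally have "ennreal (integral\<^sup>L M f) \<le> ennreal (enn2real (\<integral>\<^sup>+x. ennreal (f x) \<partial>M))"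
    by (rule ennreal_leI)
  also have "\<dots> \<le> (\<integral>\<^sup>+x. ennreal (f x) \<partial>M)" by (simp add: ennreal_enn2real_if)
  finally show ?thesis .
qed

lemma
  fixes f :: "'a \<Rightarrow> real"
  assumes "set_integrable M A f"
  shows borel_measurable_set_integrable_ennreal: "(\<lambda>x. ennreal (f x) * indicator A x) \<in> borel_measurable M"
    and ennreal_set_integral_le_set_nn_integral:
      "ennreal (set_lebesgue_integral M A f) \<le> (\<integral>\<^sup>+x\<in>A. ennreal (f x) \<partial>M)"
proof -
  have eq: "(\<lambda>x. ennreal (indicator A x *\<^sub>R f x)) = (\<lambda>x. ennreal (f x) * indicator A x)"
    by (auto simp: indicator_def fun_eq_iff)
  have "(\<lambda>x. indicator A x *\<^sub>R f x) \<in> borel_measurable M"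
    using assms unfolding set_integrable_def by blast
  then have "(\<lambda>x. ennreal (indicator A x *\<^sub>R f x)) \<in> borel_measurable M" by measurable
  then show "(\<lambda>x. ennreal (f x) * indicator A x) \<in> borel_measurable M" unfolding eq .
  show "ennreal (set_lebesgue_integral M A f) \<le> (\<integral>\<^sup>+x\<in>A. ennreal (f x) \<partial>M)"
    using ennreal_integral_le_nn_integral[of M "\<lambda>x. indicator A x *\<^sub>R f x"] assms
    unfolding set_lebesgue_integral_def set_integrable_def eq by simp
qed

lemma
  fixes \<theta> :: "'a::euclidean_space \<Rightarrow> real"
  assumes "locally_integrable \<theta>" "bounded A"
  shows set_nn_integral_locally_integrable_finite: "(\<integral>\<^sup>+x\<in>A. ennreal (\<theta> x) \<partial>lebesgue) < \<infinity>"
    and borel_measurable_locally_integrable_ennreal: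
      "A \<in> sets lebesgue \<Longrightarrow> (\<lambda>x. ennreal (\<theta> x) * indicator A x) \<in> borel_measurable lebesgue"
proof -
  obtain R where "A \<subseteq> ball 0 R" using bounded_subset_ballD[OF assms(2)] by blast
  define K where "K = cball (0::'a) R"
  have "compact K" "A \<subseteq> K" using \<open>A \<subseteq> ball 0 R\<close> by (auto simp: K_def)
  then have int: "set_integrable lebesgue K \<theta>"
    using assms(1) unfolding locally_integrable_def by blast
  have "(\<integral>\<^sup>+x\<in>A. ennreal (\<theta> x) \<partial>lebesgue) \<le> (\<integral>\<^sup>+x\<in>K. ennreal (\<theta> x) \<partial>lebesgue)"
    using \<open>A \<subseteq> K\<close> by (intro nn_integral_mono) (auto simp: indicator_def)
  also have "\<dots> \<le> (\<integral>\<^sup>+x. ennreal (norm (indicator K x *\<^sub>R \<theta> x)) \<partial>lebesgue)"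
    by (intro nn_integral_mono) (auto simp: indicator_def)
  also have "\<dots> < \<infinity>"
    using int unfolding set_integrable_def integrable_iff_bounded by blast
  finally show "(\<integral>\<^sup>+x\<in>A. ennreal (\<theta> x) \<partial>lebesgue) < \<infinity>" .
  assume "A \<in> sets lebesgue"
  have "(\<lambda>x. ennreal (\<theta> x) * indicator K x * indicator A x) \<in> borel_measurable lebesgue"
    using borel_measurable_set_integrable_ennreal[OF int] \<open>A \<in> sets lebesgue\<close> by measurable
  also have "(\<lambda>x. ennreal (\<theta> x) * indicator K x * indicator A x) = (\<lambda>x. ennreal (\<theta> x) * indicator A x)"
    using \<open>A \<subseteq> K\<close> by (auto simp: indicator_def fun_eq_iff)
  finally show "(\<lambda>x. ennreal (\<theta> x) * indicator A x) \<in> borel_measurable lebesgue" .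
qed

lemma lebesgue_outer_open_decseq:
  fixes E :: "'a::euclidean_space set"
  assumes "E \<in> sets lebesgue" "bounded E"
  obtains V :: "nat \<Rightarrow> 'a set" where "\<And>k. open (V k)" "\<And>k. E \<subseteq> V k" "decseq V" "bounded (V 0)"
    "(\<Inter>k. V k) - E \<in> null_sets lebesgue"
proof -
  obtain R where "E \<subseteq> ball 0 R" using assms(2) bounded_subset_ballD by blast
  have "\<forall>k::nat. \<exists>T. open T \<and> E \<subseteq> T \<and> emeasure lebesgue (T - E) < ennreal (1 / Suc k)"
  proof
    fix k :: nat
    have "1 / real (Suc k) > 0" by simp
    from sets_lebesgue_outer_open[OF assms(1) this] obtain T
      where "open T" "E \<subseteq> T" "T - E \<in> lmeasurable" "emeasure lebesgue (T - E) < ennreal (1 / Suc k)" .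
    then show "\<exists>T. open T \<and> E \<subseteq> T \<and> emeasure lebesgue (T - E) < ennreal (1 / Suc k)" by blast
  qed
  then obtain T where "\<forall>k. open (T k) \<and> E \<subseteq> T k \<and> emeasure lebesgue (T k - E) < ennreal (1 / Suc k)"
    by (rule choice[THEN exE])
  then have T: "\<And>k. open (T k)" "\<And>k. E \<subseteq> T k" "\<And>k. emeasure lebesgue (T k - E) < ennreal (1 / Suc k)"
    by auto
  define V where "V k = ball 0 R \<inter> (\<Inter>j\<le>k. T j)" for k
  have V_open: "open (V k)" for k unfolding V_def using T(1) by (intro open_Int open_INT) auto
  have E_V: "E \<subseteq> V k" for k unfolding V_def using T(2) \<open>E \<subseteq> ball 0 R\<close> by auto
  have "decseq V" unfolding V_def decseq_def by auto
  have "bounded (V 0)" unfolding V_def by auto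
  have "(\<Inter>k. V k) \<in> sets lebesgue"
    using V_open by (intro sets.countable_INT) auto
  then have meas: "(\<Inter>k. V k) - E \<in> sets lebesgue" using assms(1) by (rule sets.Diff)
  have small: "emeasure lebesgue ((\<Inter>k. V k) - E) \<le> ennreal (1 / Suc k)" for k
  proof -
    have "(\<Inter>k. V k) - E \<subseteq> T k - E" unfolding V_def by blast
    moreover have "T k - E \<in> sets lebesgue" using T(1)[of k] assms(1) by (intro sets.Diff) auto
    ultimately have "emeasure lebesgue ((\<Inter>k. V k) - E) \<le> emeasure lebesgue (T k - E)"
      by (rule emeasure_mono)
    then show ?thesis using T(3)[of k] by simp
  qed
  have "emeasure lebesgue ((\<Inter>k. V k) - E) \<le> 0"
  proof (rule ennreal_le_epsilon)
    fix e :: real assume "e > 0"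
    then obtain k where "1 / Suc k < e" using reals_Archimedean by (auto simp: inverse_eq_divide)
    then have "ennreal (1 / Suc k) \<le> ennreal e" by (intro ennreal_leI) simp
    then show "emeasure lebesgue ((\<Inter>k. V k) - E) \<le> 0 + ennreal e"
      using small[of k] by simp
  qed
  then have "(\<Inter>k. V k) - E \<in> null_sets lebesgue" using meas by (simp add: null_sets_def)
  with V_open E_V \<open>decseq V\<close> \<open>bounded (V 0)\<close> show ?thesis by (rule that)
qed

lemma set_nn_integral_outer_open:
  fixes \<theta> :: "'a::euclidean_space \<Rightarrow> real"
  assumes "locally_integrable \<theta>" "E \<in> sets lebesgue" "bounded E"
  obtains V :: "nat \<Rightarrow> 'a set" where "\<And>k. open (V k)" "\<And>k. E \<subseteq> V k"
    "(INF k. \<integral>\<^sup>+x\<in>V k. ennreal (\<theta> x) \<partial>lebesgue) = (\<integral>\<^sup>+x\<in>E. ennreal (\<theta> x) \<partial>lebesgue)"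
proof -
  obtain V where V: "\<And>k. open (V k)" "\<And>k. E \<subseteq> V k" "decseq V" "bounded (V 0)"
      "(\<Inter>k. V k) - E \<in> null_sets lebesgue"
    using lebesgue_outer_open_decseq[OF assms(2,3)] by blast
  have bounded: "bounded (V k)" for k using decseqD[OF V(3), of 0 k] V(4) bounded_subset by blast
  define F where "F k x = ennreal (\<theta> x) * indicator (V k) x" for k x
  have "(INF k. integral\<^sup>N lebesgue (F k)) = (\<integral>\<^sup>+x. (INF k. F k x) \<partial>lebesgue)"
  proof (rule nn_integral_monotone_convergence_INF_decseq[symmetric])
    show "decseq F"
    proof (intro decseq_SucI le_funI)
      fix k x show "F (Suc k) x \<le> F k x"
        using decseqD[OF V(3), of k "Suc k"] by (auto simp: F_def indicator_def)
    qed
    show "F k \<in> borel_measurable lebesgue" for k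
      unfolding F_def using V(1) bounded by (intro borel_measurable_locally_integrable_ennreal[OF assms(1)]) auto
    show "integral\<^sup>N lebesgue (F 0) < \<infinity>"
      unfolding F_def by (rule set_nn_integral_locally_integrable_finite[OF assms(1) bounded])
  qed
  also have "\<dots> = (\<integral>\<^sup>+x\<in>E. ennreal (\<theta> x) \<partial>lebesgue)"
  proof (rule nn_integral_cong_AE)
    show "AE x in lebesgue. (INF k. F k x) = ennreal (\<theta> x) * indicator E x"
      using AE_not_in[OF V(5)]
    proof eventually_elim
      case (elim x)
      show ?case
      proof (cases "x \<in> E")
        case False
        then obtain k where "x \<notin> V k" using elim by auto
        have "(INF k. F k x) \<le> F k x" by (rule INF_lower) simp
        then have "(INF k. F k x) \<le> 0" using \<open>x \<notin> V k\<close> by (simp add: F_def)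
        then show ?thesis using False by simp
      next
        case True
        then have "F k x = ennreal (\<theta> x)" for k using V(2)[of k] by (auto simp: F_def)
        then show ?thesis using True by simp
      qed
    qed
  qed
  finally show ?thesis unfolding F_def by (rule that[OF V(1,2)])
qed

section \<open>Graphs\<close>

definition graph :: "('a \<Rightarrow> 'b) \<Rightarrow> ('a \<times> 'b) set" where
  "graph f = range (\<lambda>x. (x, f x))"

definition graph_measure_const :: "nat \<Rightarrow> nat \<Rightarrow> real" where
  "graph_measure_const N M = alpha_q N * 20 ^ N / density_threshold N * projection_const N M"

lemma graph_measure_const_pos: "M \<le> N \<Longrightarrow> 0 < N \<Longrightarrow> graph_measure_const N M > 0"
  unfolding graph_measure_const_def density_threshold_def
  using alpha_q_pos[of "real N"] projection_const_pos[of M "real N"] by simp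

abbreviation shadow :: "('a::metric_space \<Rightarrow> 'b::metric_space) \<Rightarrow> 'a \<times> 'b \<Rightarrow> real \<Rightarrow> 'a set" where
  "shadow f z r \<equiv> fst ` (graph f \<inter> ball z r)"

lemma mem_fst_graph_Int_iff: "x \<in> fst ` (graph f \<inter> B) \<longleftrightarrow> (x, f x) \<in> B"
  by (force simp: graph_def)

locale graph_projection_bound =
  fixes f :: "real^'n \<Rightarrow> real^'m" and \<theta> :: "real^'n \<Rightarrow> real"
  assumes dim_le: "CARD('m) \<le> CARD('n)"
    and locally_integrable_theta: "locally_integrable \<theta>"
    and projection_content_le: "\<And>z r. r > 0 \<Longrightarrow>
      hausdorff_content (real CARD('n) - real CARD('m)) (shadow f z r) \<le>
      ennreal (r powr (- real CARD('m)) * (LINT x : shadow f z (4 * r) | lebesgue. \<theta> x))"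
begin

lemma density_threshold_less_projection_integral:
  assumes "r > 0" "S \<subseteq> graph f"
    and dense: "ennreal (density_threshold CARD('n) * r powr CARD('n)) <
      hausdorff_content CARD('n) (S \<inter> ball z r)"
  shows "density_threshold CARD('n) * r powr CARD('n) < projection_const CARD('n) CARD('m) *
    (LINT x : shadow f z (4 * r) | lebesgue. \<theta> x)"
proof -
  define N M where "N = CARD('n)" and "M = CARD('m)"
  define L where "L = (LINT x : shadow f z (4 * r) | lebesgue. \<theta> x)"
  have "hausdorff_content N (S \<inter> ball z r) \<le> hausdorff_content N (graph f \<inter> ball z r)"
    unfolding hausdorff_content_def using assms(2) by (intro hausdorff_approx_mono) auto
  also have "\<dots> \<le> ennreal (projection_const N M * r ^ M) *
      hausdorff_content (real N - real M) (shadow f z r)"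
    unfolding N_def M_def using \<open>r > 0\<close> dim_le by (intro hausdorff_content_le_projection) auto
  also have "\<dots> \<le> ennreal (projection_const N M * r ^ M) * ennreal (r powr (- M) * L)"
    using projection_content_le[OF \<open>r > 0\<close>] unfolding N_def M_def L_def
    by (intro mult_left_mono) auto
  also have "\<dots> = ennreal (projection_const N M * r ^ M * (r powr (- M) * L))"
    using projection_const_pos[of M N] dim_le \<open>r > 0\<close> unfolding N_def M_def
    by (intro ennreal_mult'[symmetric]) auto
  also have "projection_const N M * r ^ M * (r powr (- M) * L) = projection_const N M * L"
  proof -
    have "r ^ M * r powr (- M) = 1" using \<open>r > 0\<close> by (simp add: powr_minus powr_realpow)
    then show ?thesis by (metis mult.assoc mult.left_commute mult.right_neutral)
  qed
  finally have "ennreal (density_threshold N * r powr N) < ennreal (projection_const N M * L)"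
    using dense unfolding N_def by (rule less_le_trans[rotated])
  then show ?thesis
    using ennreal_leI[of "projection_const N M * L" "density_threshold N * r powr N"]
    unfolding N_def M_def L_def by fastforce
qed

lemma
  assumes "r > 0" "S \<subseteq> graph f"
    and dense: "ennreal (density_threshold CARD('n) * r powr CARD('n)) <
      hausdorff_content CARD('n) (S \<inter> ball z r)"
  shows set_integrable_projection_ball: "set_integrable lebesgue (shadow f z (4 * r)) \<theta>"
    and hcontrib_ball_le_integral: "hcontrib CARD('n) (ball z (20 * r)) \<le>
      ennreal (graph_measure_const CARD('n) CARD('m)) *
        (\<integral>\<^sup>+x\<in>shadow f z (4 * r). ennreal (\<theta> x) \<partial>lebesgue)"
proof -
  define N M where "N = CARD('n)" and "M = CARD('m)"
  define A where "A = shadow f z (4 * r)"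
  define L where "L = (LINT x : A | lebesgue. \<theta> x)"
  have less: "density_threshold N * r powr N < projection_const N M * L"
    using density_threshold_less_projection_integral[OF assms] unfolding N_def M_def L_def A_def .
  moreover have "0 < density_threshold N * r powr N"
    using alpha_q_pos[of N] \<open>r > 0\<close> by (simp add: density_threshold_def N_def)
  ultimately have "L \<noteq> 0" by auto
  \<comment> \<open>A non-integrable \<open>\<theta>\<close> would have the junk integral \<open>0\<close> on \<open>A\<close>.\<close>
  then show integrable: "set_integrable lebesgue (shadow f z (4 * r)) \<theta>"
    unfolding L_def A_def set_lebesgue_integral_def set_integrable_def
    using not_integrable_integral_eq by blast
  have "alpha_q N * (40 * r / 2) powr N =
      alpha_q N * 20 ^ N / density_threshold N * (density_threshold N * r powr N)"
    using \<open>r > 0\<close> alpha_q_pos[of N]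
    by (simp add: powr_mult powr_realpow density_threshold_def N_def)
  also have "\<dots> \<le> alpha_q N * 20 ^ N / density_threshold N * (projection_const N M * L)"
    using less alpha_q_pos[of N] by (intro mult_left_mono) (auto simp: density_threshold_def)
  also have "\<dots> = graph_measure_const N M * L" by (simp add: graph_measure_const_def)
  finally have bound: "alpha_q N * (40 * r / 2) powr N \<le> graph_measure_const N M * L" .
  have "hcontrib N (ball z (20 * r)) \<le> ennreal (alpha_q N * (40 * r / 2) powr N)"
  proof (rule hcontrib_le_of_dist_le)
    show "real N > 0" by (simp add: N_def)
    fix a b assume "a \<in> ball z (20 * r)" "b \<in> ball z (20 * r)"
    then show "dist a b \<le> 40 * r" using dist_triangle[of a b z] by (simp add: dist_commute)
  qed
  also have "\<dots> \<le> ennreal (graph_measure_const N M * L)" using bound by (rule ennreal_leI)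
  also have "\<dots> = ennreal (graph_measure_const N M) * ennreal L"
    using graph_measure_const_pos[of M N] dim_le by (intro ennreal_mult') (auto simp: N_def M_def)
  also have "\<dots> \<le> ennreal (graph_measure_const N M) * (\<integral>\<^sup>+x\<in>A. ennreal (\<theta> x) \<partial>lebesgue)"
    using integrable unfolding L_def A_def
    by (intro mult_left_mono ennreal_set_integral_le_set_nn_integral) auto
  finally show "hcontrib N (ball z (20 * r)) \<le>
      ennreal (graph_measure_const N M) * (\<integral>\<^sup>+x\<in>A. ennreal (\<theta> x) \<partial>lebesgue)" .
qed

lemma hausdorff_approx_high_density_graph_le:
  assumes "open U" "S \<subseteq> graph f" "fst ` S \<subseteq> U" "\<delta> > 0"
  shows "hausdorff_approx (ennreal \<delta>) CARD('n) (S - low_density_points CARD('n) S) \<le>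
    ennreal (graph_measure_const CARD('n) CARD('m)) * (\<integral>\<^sup>+x\<in>U. ennreal (\<theta> x) \<partial>lebesgue)"
proof -
  define N where "N = CARD('n)"
  define Good where "Good = S - low_density_points N S"
  have "\<exists>r. 0 < r \<and> 40 * r \<le> \<delta> \<and> ball (fst z) (4 * r) \<subseteq> U \<and>
      ennreal (density_threshold N * r powr N) < hausdorff_content N (S \<inter> ball z r)"
    if "z \<in> Good" for z
  proof -
    have "fst z \<in> U" using \<open>z \<in> Good\<close> assms(3) by (auto simp: Good_def)
    moreover have "z \<in> S - low_density_points N S" using \<open>z \<in> Good\<close> by (simp add: Good_def)
    moreover have "\<delta>/40 > 0" using assms(4) by simp
    ultimately obtain r where "0 < r" "r < \<delta>/40" "ball (fst z) (4 * r) \<subseteq> U"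
        "ennreal (density_threshold N * r powr N) < hausdorff_content N (S \<inter> ball z r)"
      using high_density_radiusE[of z S N U "\<delta>/40"] assms(1) by blast
    then show ?thesis by (intro exI[of _ r]) auto
  qed
  then obtain rad where rad: "\<And>z. z \<in> Good \<Longrightarrow> 0 < rad z \<and> 40 * rad z \<le> \<delta> \<and>
      ball (fst z) (4 * rad z) \<subseteq> U \<and>
      ennreal (density_threshold N * rad z powr N) < hausdorff_content N (S \<inter> ball z (rad z))"
    using bchoice[of Good] by metis
  show ?thesis
    unfolding N_def[symmetric] Good_def[symmetric]
  proof (rule hausdorff_approx_le_by_Vitali[where \<rho>="\<lambda>z. 4 * rad z"
        and F="\<lambda>z x. ennreal (\<theta> x) * indicator (shadow f z (4 * rad z)) x"])
    fix z assume "z \<in> Good"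
    note rad_z = rad[OF this]
    show "0 < 4 * rad z \<and> 10 * (4 * rad z) \<le> \<delta>" using rad_z by auto
    show "hcontrib N (ball z (5 * (4 * rad z))) \<le> ennreal (graph_measure_const N CARD('m)) *
        (\<integral>\<^sup>+x\<in>shadow f z (4 * rad z). ennreal (\<theta> x) \<partial>lebesgue)"
      using hcontrib_ball_le_integral[of "rad z" S z] rad_z assms(2) by (simp add: N_def)
    show "(\<lambda>x. ennreal (\<theta> x) * indicator (shadow f z (4 * rad z)) x)
        \<in> borel_measurable lebesgue"
      using set_integrable_projection_ball[of "rad z" S z] rad_z assms(2)
      by (intro borel_measurable_set_integrable_ennreal) (simp add: N_def)
    fix x
    show "ennreal (\<theta> x) * indicator (shadow f z (4 * rad z)) x \<le>
        ennreal (\<theta> x) * indicator U x"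
    proof (cases "x \<in> shadow f z (4 * rad z)")
      case True
      then have "dist (fst z) x < 4 * rad z"
        using dist_fst_le[of z "(x, f x)"] by (simp add: mem_fst_graph_Int_iff)
      then have "x \<in> U" using rad_z by auto
      then show ?thesis using True by simp
    qed simp
  next
    fix z w x assume "disjnt (ball z (4 * rad z)) (ball w (4 * rad w))"
    then show "ennreal (\<theta> x) * indicator (shadow f z (4 * rad z)) x = 0 \<or>
        ennreal (\<theta> x) * indicator (shadow f w (4 * rad w)) x = 0"
      by (auto simp: mem_fst_graph_Int_iff disjnt_iff indicator_def)
  qed
qed

lemma graph_measure_le_open:
  assumes "open U" "E \<subseteq> U"
  shows "hausdorff_measure CARD('n) ((\<lambda>x. (x, f x)) ` E) \<le>
    ennreal (graph_measure_const CARD('n) CARD('m)) * (\<integral>\<^sup>+x\<in>U. ennreal (\<theta> x) \<partial>lebesgue)"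
proof -
  define S where "S = (\<lambda>x. (x, f x)) ` E"
  have "S \<subseteq> graph f" "fst ` S \<subseteq> U" using assms(2) by (auto simp: S_def graph_def)
  have "hausdorff_measure CARD('n) S \<le> hausdorff_measure CARD('n) (S - low_density_points CARD('n) S)"
    by (rule hausdorff_measure_le_high_density_part) simp
  also have "\<dots> \<le> ennreal (graph_measure_const CARD('n) CARD('m)) * (\<integral>\<^sup>+x\<in>U. ennreal (\<theta> x) \<partial>lebesgue)"
    using hausdorff_approx_high_density_graph_le[OF assms(1) \<open>S \<subseteq> graph f\<close> \<open>fst ` S \<subseteq> U\<close>]
    by (rule hausdorff_measure_leI)
  finally show ?thesis unfolding S_def .
qed

lemma graph_measure_le_bounded:
  assumes "E \<in> sets lebesgue" "bounded E"
  shows "hausdorff_measure CARD('n) ((\<lambda>x. (x, f x)) ` E) \<le>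
    ennreal (graph_measure_const CARD('n) CARD('m)) * (\<integral>\<^sup>+x\<in>E. ennreal (\<theta> x) \<partial>lebesgue)"
proof (rule set_nn_integral_outer_open[OF locally_integrable_theta assms])
  fix V :: "nat \<Rightarrow> (real^'n) set"
  assume V: "\<And>k. open (V k)" "\<And>k. E \<subseteq> V k"
    "(INF k. \<integral>\<^sup>+x\<in>V k. ennreal (\<theta> x) \<partial>lebesgue) = (\<integral>\<^sup>+x\<in>E. ennreal (\<theta> x) \<partial>lebesgue)"
  have "hausdorff_measure CARD('n) ((\<lambda>x. (x, f x)) ` E) \<le>
      ennreal (graph_measure_const CARD('n) CARD('m)) * (INF k. \<integral>\<^sup>+x\<in>V k. ennreal (\<theta> x) \<partial>lebesgue)"
    using graph_measure_const_pos[OF dim_le]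
    by (intro le_mult_INF_ennreal graph_measure_le_open V(1,2)) auto
  then show ?thesis unfolding V(3) .
qed

lemma graph_measure_le:
  assumes "E \<in> sets lebesgue"
  shows "hausdorff_measure CARD('n) ((\<lambda>x. (x, f x)) ` E) \<le>
    ennreal (graph_measure_const CARD('n) CARD('m)) * (\<integral>\<^sup>+x\<in>E. ennreal (\<theta> x) \<partial>lebesgue)"
proof -
  define c where "c = ennreal (graph_measure_const CARD('n) CARD('m))"
  define D where "D = disjointed (\<lambda>k. E \<inter> ball 0 (real k))"
  have "range (\<lambda>k. E \<inter> ball 0 (real k)) \<subseteq> sets lebesgue" using assms by auto
  then have "range D \<subseteq> sets lebesgue" unfolding D_def by (rule sets.range_disjointed_sets)
  then have D_sets: "D k \<in> sets lebesgue" for k by blast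
  have D_bounded: "bounded (D k)" for k
    using disjointed_subset[of "\<lambda>k. E \<inter> ball 0 (real k)" k] bounded_subset[OF bounded_ball]
    unfolding D_def by blast
  have E_eq: "E = (\<Union>k. D k)"
  proof -
    have "x \<in> (\<Union>k. E \<inter> ball 0 (real k))" if "x \<in> E" for x
      using that reals_Archimedean2[of "norm x"] by auto
    then show ?thesis unfolding D_def UN_disjointed_eq by blast
  qed
  have "hausdorff_measure CARD('n) ((\<lambda>x. (x, f x)) ` E) =
      hausdorff_measure CARD('n) (\<Union>k. (\<lambda>x. (x, f x)) ` D k)"
    by (subst E_eq) (simp add: image_UN)
  also have "\<dots> \<le> (\<Sum>k. hausdorff_measure CARD('n) ((\<lambda>x. (x, f x)) ` D k))"
    by (rule hausdorff_measure_countable_subadditive)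
  also have "\<dots> \<le> (\<Sum>k. c * (\<integral>\<^sup>+x\<in>D k. ennreal (\<theta> x) \<partial>lebesgue))"
    unfolding c_def by (intro suminf_le graph_measure_le_bounded D_sets D_bounded) auto
  also have "\<dots> = c * (\<Sum>k. \<integral>\<^sup>+x\<in>D k. ennreal (\<theta> x) \<partial>lebesgue)"
    by (rule ennreal_suminf_cmult)
  also have "(\<Sum>k. \<integral>\<^sup>+x\<in>D k. ennreal (\<theta> x) \<partial>lebesgue) =
      (\<integral>\<^sup>+x. (\<Sum>k. ennreal (\<theta> x) * indicator (D k) x) \<partial>lebesgue)"
    by (rule nn_integral_suminf[symmetric])
      (rule borel_measurable_locally_integrable_ennreal[OF locally_integrable_theta D_bounded D_sets])
  also have "(\<lambda>x. \<Sum>k. ennreal (\<theta> x) * indicator (D k) x) = (\<lambda>x. ennreal (\<theta> x) * indicator E x)"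
  proof
    fix x
    have "(\<Sum>k. indicator (D k) x) = (indicator (\<Union>k. D k) x :: ennreal)"
      unfolding D_def by (rule suminf_indicator[OF disjoint_family_disjointed])
    then show "(\<Sum>k. ennreal (\<theta> x) * indicator (D k) x) = ennreal (\<theta> x) * indicator E x"
      by (simp add: ennreal_suminf_cmult flip: E_eq)
  qed
  finally show ?thesis unfolding c_def .
qed

lemma graph_measure_null:
  assumes "E \<in> null_sets lebesgue"
  shows "hausdorff_measure CARD('n) ((\<lambda>x. (x, f x)) ` E) = 0"
proof -
  have "hausdorff_measure CARD('n) ((\<lambda>x. (x, f x)) ` E) \<le>
      ennreal (graph_measure_const CARD('n) CARD('m)) * (\<integral>\<^sup>+x\<in>E. ennreal (\<theta> x) \<partial>lebesgue)"
    using assms by (intro graph_measure_le) auto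
  also have "(\<integral>\<^sup>+x\<in>E. ennreal (\<theta> x) \<partial>lebesgue) = 0" using assms by (rule nn_integral_null_set)
  finally show ?thesis by simp
qed

end

lemma ennreal_le_if_enn2ereal_le: "enn2ereal x \<le> ereal t \<Longrightarrow> x \<le> ennreal t"
  using e2ennreal_mono[of "enn2ereal x" "ereal t"] by (simp add: e2ennreal_enn2ereal e2ennreal_ereal)

lemma graph_projection_boundI:
  fixes f :: "real^'n \<Rightarrow> real^'m" and \<theta> :: "real^'n \<Rightarrow> real"
  assumes "CARD('m) \<le> CARD('n)" "locally_integrable \<theta>"
    and "\<forall>z r. r > 0 \<longrightarrow>
      enn2ereal (hausdorff_content (real CARD('n) - real CARD('m)) (fst ` (range (\<lambda>x. (x, f x)) \<inter> ball z r)))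
      \<le> ereal (r powr (- real CARD('m)) *
           (LINT x : fst ` (range (\<lambda>x. (x, f x)) \<inter> ball z (4 * r)) | lebesgue. \<theta> x))"
  shows "graph_projection_bound f \<theta>"
  using assms by unfold_locales (auto simp: graph_def intro: ennreal_le_if_enn2ereal_le)

theorem theorem4p4:
  assumes "CARD('m) \<le> CARD('n)"
  shows "\<exists>C::real. C > 0 \<and>
    (\<forall>(f :: real^'n \<Rightarrow> real^'m) (\<theta> :: real^'n \<Rightarrow> real).
      W11_loc f \<and> locally_integrable \<theta> \<and>
      (\<forall>(z :: (real^'n) \<times> (real^'m)) r. r > 0 \<longrightarrow>
         enn2ereal (hausdorff_content (real CARD('n) - real CARD('m))
                      (fst ` (range (\<lambda>x. (x, f x)) \<inter> ball z r)))
         \<le> ereal (r powr (- real CARD('m)) *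
              (LINT x : fst ` (range (\<lambda>x. (x, f x)) \<inter> ball z (4 * r)) | lebesgue. \<theta> x)))
      \<longrightarrow> (\<forall>E \<in> sets lebesgue.
             hausdorff_measure (real CARD('n)) ((\<lambda>x. (x, f x)) ` E)
               \<le> ennreal C * (\<integral>\<^sup>+ x \<in> E. ennreal (\<theta> x) \<partial>lebesgue))
        \<and> (\<forall>E \<in> null_sets lebesgue.
             hausdorff_measure (real CARD('n)) ((\<lambda>x. (x, f x)) ` E) = 0))"
proof (intro exI[of _ "graph_measure_const CARD('n) CARD('m)"] conjI allI impI ballI, goal_cases)
  case 1
  show ?case using graph_measure_const_pos[OF assms] by simp
next
  case (2 f \<theta> E)
  then interpret graph_projection_bound f \<theta> using assms by (intro graph_projection_boundI) auto
  show ?case using \<open>E \<in> sets lebesgue\<close> by (rule graph_measure_le)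
next
  case (3 f \<theta> E)
  then interpret graph_projection_bound f \<theta> using assms by (intro graph_projection_boundI) auto
  show ?case using \<open>E \<in> null_sets lebesgue\<close> by (rule graph_measure_null)
qed

end
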